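(* Let $G$ be a connected graph with $n$ vertices. For any $i\in V(G)$, \[ nKf_i(G)-Kf(G)\leq\frac{n-1}{\alpha_i(G)}. \]
   Context: $G$ is a finite simple graph with vertex set $[n]$ and Laplacian matrix $\mathcal{L}_G=D-A$. For a vertex $i$, $\alpha_i(G)=\min\{\mathbf{x}^\top\mathcal{L}_G\mathbf{x} : \mathbf{x}\in\mathbb{R}^n_+,\ \sum_j x_j^2=1,\ x_i=0\}$ (the inverse Perron value of $i$); for connected $G$ this equals the smallest eigenvalue of the principal submatrix $\mathcal{L}_G(i)$ obtained by deleting row and column $i$. The resistance distance $r_{ij}(G)$ is the effective resistance between $i$ and $j$ when every edge is a unit resistor. The resistance centrality of $i$ is $Kf_i(G)=\sum_{j\in V(G)}r_{ij}(G)$ and the Kirchhoff index is $Kf(G)=\sum_{\{i,j\}\subseteq V(G)}r_{ij}(G)$ (sum over unordered pairs). *)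

theory Defs
  imports Complex_Main
begin

definition simple_graph :: "nat \<Rightarrow> (nat \<Rightarrow> nat \<Rightarrow> bool) \<Rightarrow> bool" where
  "simple_graph n E \<longleftrightarrow>
     (\<forall>i j. E i j \<longrightarrow> E j i) \<and> (\<forall>i. \<not> E i i) \<and>
     (\<forall>i j. E i j \<longrightarrow> i \<in> {1..n} \<and> j \<in> {1..n})"

definition connected_graph :: "nat \<Rightarrow> (nat \<Rightarrow> nat \<Rightarrow> bool) \<Rightarrow> bool" where
  "connected_graph n E \<longleftrightarrow> (\<forall>i\<in>{1..n}. \<forall>j\<in>{1..n}. E\<^sup>*\<^sup>* i j)"

definition degree :: "nat \<Rightarrow> (nat \<Rightarrow> nat \<Rightarrow> bool) \<Rightarrow> nat \<Rightarrow> nat" where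
  "degree n E i = card {j\<in>{1..n}. E i j}"

definition laplacian :: "nat \<Rightarrow> (nat \<Rightarrow> nat \<Rightarrow> bool) \<Rightarrow> nat \<Rightarrow> nat \<Rightarrow> real" where
  "laplacian n E i j =
     (if i = j then real (degree n E i) else if E i j then -1 else 0)"

definition lap_form :: "nat \<Rightarrow> (nat \<Rightarrow> nat \<Rightarrow> bool) \<Rightarrow> (nat \<Rightarrow> real) \<Rightarrow> real" where
  "lap_form n E x = (\<Sum>j\<in>{1..n}. \<Sum>k\<in>{1..n}. x j * laplacian n E j k * x k)"

definition inv_perron :: "nat \<Rightarrow> (nat \<Rightarrow> nat \<Rightarrow> bool) \<Rightarrow> nat \<Rightarrow> real" where
  "inv_perron n E i = Inf {lap_form n E x | x.
      (\<forall>j\<in>{1..n}. x j \<ge> 0) \<and> (\<Sum>j\<in>{1..n}. (x j)\<^sup>2) = 1 \<and> x i = 0}"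

text \<open>Effective resistance: inject unit current at i, extract at j; by Kirchhoff's
  laws the node potentials v satisfy L v = e_i - e_j, and r_ij = v_i - v_j.\<close>
definition resistance :: "nat \<Rightarrow> (nat \<Rightarrow> nat \<Rightarrow> bool) \<Rightarrow> nat \<Rightarrow> nat \<Rightarrow> real" where
  "resistance n E i j = (THE d. \<exists>v :: nat \<Rightarrow> real.
      (\<forall>k\<in>{1..n}. (\<Sum>l\<in>{1..n}. laplacian n E k l * v l)
                   = (if k = i then 1 else 0) - (if k = j then 1 else 0))
      \<and> d = v i - v j)"

definition resistance_centrality :: "nat \<Rightarrow> (nat \<Rightarrow> nat \<Rightarrow> bool) \<Rightarrow> nat \<Rightarrow> real" where
  "resistance_centrality n E i = (\<Sum>j\<in>{1..n}. resistance n E i j)"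

text \<open>Kirchhoff index: sum over unordered pairs {i,j}, i.e. pairs with i < j.\<close>
definition kirchhoff_index :: "nat \<Rightarrow> (nat \<Rightarrow> nat \<Rightarrow> bool) \<Rightarrow> real" where
  "kirchhoff_index n E =
     (\<Sum>(i, j)\<in>{(i, j). i \<in> {1..n} \<and> j \<in> {1..n} \<and> i < j}. resistance n E i j)"

end

theory Submission
  imports Defs "Jordan_Normal_Form.Determinant" "HOL-Analysis.Convex"
begin

(* Let g_j be the columns of the Moore-Penrose inverse of L, i.e. L g_j = e_j - 1/n with
   sum g_j = 0. Then r_ab = g_a(a) - g_a(b) - g_b(a) + g_b(b), and summing gives
   n Kf_i(G) - Kf(G) = n^2 g_i(i), which is the sum Q of the potential w = n (g_i(i) - g_i).
   This w vanishes at i and has (L w)_k = 1 for k <> i, so w >= 0 by the minimum principle and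
   w^T L w = Q. Testing alpha_i with w gives alpha_i <= Q / |w|^2 <= (n - 1) / Q by
   Cauchy-Schwarz; and alpha_i > 0, since every admissible x has
   1 <= (sum x)^2 = (x^T L w)^2 <= (x^T L x) Q. *)

section \<open>The Laplacian as an operator\<close>

definition lap_apply :: "nat \<Rightarrow> (nat \<Rightarrow> nat \<Rightarrow> bool) \<Rightarrow> (nat \<Rightarrow> real) \<Rightarrow> nat \<Rightarrow> real" where
  "lap_apply n E x j = (\<Sum>k\<in>{1..n}. laplacian n E j k * x k)"

lemma simple_graph_sym: "simple_graph n E \<Longrightarrow> E a b = E b a"
  unfolding simple_graph_def by blast

lemma lap_apply_edge_sum:
  assumes "simple_graph n E" "j \<in> {1..n}"
  shows "lap_apply n E x j = (\<Sum>k\<in>{1..n}. if E j k then x j - x k else 0)"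
proof -
  have no_loop: "\<not> E j j" using assms(1) unfolding simple_graph_def by blast
  have "lap_apply n E x j
      = (\<Sum>k\<in>{1..n}. (if k = j then real (Defs.degree n E j) * x j else 0) + (if E j k then - x k else 0))"
    unfolding lap_apply_def laplacian_def by (rule sum.cong) (auto simp: no_loop)
  also have "\<dots> = real (Defs.degree n E j) * x j + (\<Sum>k\<in>{1..n}. if E j k then - x k else 0)"
    using assms(2) by (simp add: sum.distrib)
  also have "real (Defs.degree n E j) = (\<Sum>k\<in>{1..n}. if E j k then 1 else 0)"
    unfolding Defs.degree_def by (simp add: sum.If_cases Int_def conj_commute)
  also have "\<dots> * x j + (\<Sum>k\<in>{1..n}. if E j k then - x k else 0)
      = (\<Sum>k\<in>{1..n}. (if E j k then 1 else 0) * x j + (if E j k then - x k else 0))"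
    by (simp add: sum_distrib_right sum.distrib)
  also have "\<dots> = (\<Sum>k\<in>{1..n}. if E j k then x j - x k else 0)"
    by (intro sum.cong refl) simp
  finally show ?thesis .
qed

lemma edge_sum_swap:
  assumes "simple_graph n E"
  shows "(\<Sum>j\<in>A. \<Sum>k\<in>A. if E j k then f j k else (0::real))
       = (\<Sum>j\<in>A. \<Sum>k\<in>A. if E j k then f k j else 0)"
  by (subst sum.swap) (simp add: simple_graph_sym[OF assms])

lemma sum_mult_lap_apply_edge_sum:
  assumes "simple_graph n E"
  shows "2 * (\<Sum>j\<in>{1..n}. x j * lap_apply n E y j)
       = (\<Sum>j\<in>{1..n}. \<Sum>k\<in>{1..n}. if E j k then (x j - x k) * (y j - y k) else 0)"
proof -
  let ?S = "\<lambda>f. \<Sum>j\<in>{1..n}. \<Sum>k\<in>{1..n}. if E j k then f j k else (0::real)"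
  have "(\<Sum>j\<in>{1..n}. x j * lap_apply n E y j) = ?S (\<lambda>j k. x j * (y j - y k))"
    by (intro sum.cong refl)
       (simp add: lap_apply_edge_sum[OF assms] sum_distrib_left if_distrib cong: if_cong)
  moreover have "?S (\<lambda>j k. x j * (y j - y k)) = ?S (\<lambda>j k. x k * (y k - y j))"
    by (rule edge_sum_swap[OF assms])
  moreover have "?S (\<lambda>j k. x j * (y j - y k)) + ?S (\<lambda>j k. x k * (y k - y j))
               = ?S (\<lambda>j k. (x j - x k) * (y j - y k))"
    unfolding sum.distrib[symmetric] by (intro sum.cong refl) (simp add: algebra_simps)
  ultimately show ?thesis by simp
qed

lemma sum_lap_apply_eq_0:
  assumes "simple_graph n E"
  shows "(\<Sum>j\<in>{1..n}. lap_apply n E x j) = 0"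
  using sum_mult_lap_apply_edge_sum[OF assms, of "\<lambda>_. 1" x] by (simp cong: if_cong)

lemma lap_form_eq_sum_mult_lap_apply: "lap_form n E x = (\<Sum>j\<in>{1..n}. x j * lap_apply n E x j)"
  unfolding lap_form_def lap_apply_def by (simp add: sum_distrib_left mult.assoc)

lemma lap_form_edge_sum:
  assumes "simple_graph n E"
  shows "2 * lap_form n E x = (\<Sum>j\<in>{1..n}. \<Sum>k\<in>{1..n}. if E j k then (x j - x k)\<^sup>2 else 0)"
  using sum_mult_lap_apply_edge_sum[OF assms, of x x]
  by (simp add: lap_form_eq_sum_mult_lap_apply power2_eq_square cong: if_cong)

lemma lap_form_nonneg:
  assumes "simple_graph n E"
  shows "lap_form n E x \<ge> 0"
proof -
  have "0 \<le> (\<Sum>j\<in>{1..n}. \<Sum>k\<in>{1..n}. if E j k then (x j - x k)\<^sup>2 else (0::real))"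
    by (intro sum_nonneg) auto
  then show ?thesis using lap_form_edge_sum[OF assms, of x] by simp
qed

lemma sum_mult_lap_apply_sq_le:
  assumes "simple_graph n E"
  shows "(\<Sum>j\<in>{1..n}. x j * lap_apply n E y j)\<^sup>2 \<le> lap_form n E x * lap_form n E y"
proof -
  define d where "d = (\<lambda>z (j, k). if E j k then z j - z k else (0::real))"
  have edge_sum: "(\<Sum>j\<in>{1..n}. \<Sum>k\<in>{1..n}. if E j k then f j k else 0)
      = (\<Sum>p\<in>{1..n} \<times> {1..n}. if E (fst p) (snd p) then f (fst p) (snd p) else (0::real))" for f
    by (simp add: sum.cartesian_product case_prod_beta)
  have prod: "(if P then a else 0) * (if P then b else 0) = (if P then a * b else (0::real))"
    and sq: "(if P then a else 0)\<^sup>2 = (if P then a\<^sup>2 else (0::real))" for P a b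
    by simp_all
  have "(2 * (\<Sum>j\<in>{1..n}. x j * lap_apply n E y j))\<^sup>2
      = (\<Sum>p\<in>{1..n} \<times> {1..n}. d x p * d y p)\<^sup>2"
    unfolding sum_mult_lap_apply_edge_sum[OF assms] edge_sum d_def
    by (simp add: case_prod_beta prod)
  also have "\<dots> \<le> (\<Sum>p\<in>{1..n} \<times> {1..n}. (d x p)\<^sup>2) * (\<Sum>p\<in>{1..n} \<times> {1..n}. (d y p)\<^sup>2)"
    by (rule Cauchy_Schwarz_ineq_sum)
  also have "\<dots> = (2 * lap_form n E x) * (2 * lap_form n E y)"
    unfolding lap_form_edge_sum[OF assms] edge_sum d_def
    by (simp add: case_prod_beta sq)
  finally show ?thesis by (simp add: power2_eq_square)
qed

lemma lap_apply_diff: "lap_apply n E (\<lambda>k. x k - y k) j = lap_apply n E x j - lap_apply n E y j"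
  unfolding lap_apply_def by (simp add: sum_subtractf algebra_simps)

lemma lap_apply_scale: "lap_apply n E (\<lambda>k. c * x k) j = c * lap_apply n E x j"
  unfolding lap_apply_def by (simp add: sum_distrib_left algebra_simps)

lemma lap_apply_sum: "lap_apply n E (\<lambda>k. \<Sum>b\<in>B. g b k) j = (\<Sum>b\<in>B. lap_apply n E (g b) j)"
  unfolding lap_apply_def by (simp add: sum_distrib_left) (rule sum.swap)

lemma lap_apply_const:
  assumes "simple_graph n E" "j \<in> {1..n}"
  shows "lap_apply n E (\<lambda>_. c) j = 0"
  using assms by (simp add: lap_apply_edge_sum cong: if_cong)

lemma lap_apply_diff_const:
  assumes "simple_graph n E" "j \<in> {1..n}"
  shows "lap_apply n E (\<lambda>k. x k - c) j = lap_apply n E x j"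
  using lap_apply_diff[of n E x "\<lambda>_. c"] lap_apply_const[OF assms] by simp

lemma lap_apply_eq_0_imp_const:
  assumes sg: "simple_graph n E" and conn: "connected_graph n E" and i: "i \<in> {1..n}"
    and harmonic: "\<forall>k\<in>{1..n}. lap_apply n E x k = 0"
  shows "\<forall>k\<in>{1..n}. x k = x i"
proof -
  have "(\<Sum>j\<in>{1..n}. \<Sum>k\<in>{1..n}. if E j k then (x j - x k)\<^sup>2 else 0) = 0"
    using lap_form_edge_sum[OF sg, of x] harmonic
    by (simp add: lap_form_eq_sum_mult_lap_apply)
  then have "\<forall>j\<in>{1..n}. \<forall>k\<in>{1..n}. (if E j k then (x j - x k)\<^sup>2 else 0) = (0::real)"
    by (simp add: sum_nonneg sum_nonneg_eq_0_iff)
  then have edge: "E a b \<Longrightarrow> x a = x b" for a b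
    using sg unfolding simple_graph_def by (metis power_eq_0_iff right_minus_eq)
  have "E\<^sup>*\<^sup>* i k \<Longrightarrow> x k = x i" for k
    by (induction rule: rtranclp_induct) (auto dest: edge)
  then show ?thesis using conn i unfolding connected_graph_def by blast
qed

section \<open>Solvability of Laplacian systems\<close>

text \<open>The matrix L + J, with vertex k stored at row and column index k - 1.\<close>
definition lap_plus_ones_mat :: "nat \<Rightarrow> (nat \<Rightarrow> nat \<Rightarrow> bool) \<Rightarrow> real mat" where
  "lap_plus_ones_mat n E = mat n n (\<lambda>(a, c). laplacian n E (Suc a) (Suc c) + 1)"

lemma lap_plus_ones_mat_mult_vec:
  assumes "u \<in> carrier_vec n" "k \<in> {1..n}"
  shows "(lap_plus_ones_mat n E *\<^sub>v u) $ (k - 1)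
       = lap_apply n E (\<lambda>l. u $ (l - 1)) k + (\<Sum>l\<in>{1..n}. u $ (l - 1))"
proof -
  obtain a where a: "k = Suc a" "a < n" using assms(2) by (cases k) auto
  have "{1..n} = Suc ` {..<n}" by (simp add: image_Suc_lessThan)
  then have reindex: "(\<Sum>c<n. f (Suc c)) = (\<Sum>l\<in>{1..n}. f l)" for f :: "nat \<Rightarrow> real"
    by (simp add: sum.reindex)
  have "(lap_plus_ones_mat n E *\<^sub>v u) $ (k - 1) = (\<Sum>c<n. (laplacian n E k (Suc c) + 1) * u $ c)"
    using assms(1) a unfolding lap_plus_ones_mat_def by (simp add: scalar_prod_def lessThan_atLeast0)
  also have "\<dots> = (\<Sum>l\<in>{1..n}. (laplacian n E k l + 1) * u $ (l - 1))"
    using reindex[of "\<lambda>l. (laplacian n E k l + 1) * u $ (l - 1)"] by simp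
  finally show ?thesis
    unfolding lap_apply_def by (simp add: algebra_simps sum.distrib)
qed

lemma lap_apply_plus_const_balanced_imp_zero:
  assumes "simple_graph n E" "n \<ge> 1"
    and "\<forall>k\<in>{1..n}. lap_apply n E x k + c = b k" "(\<Sum>k\<in>{1..n}. b k) = 0"
  shows "c = 0"
proof -
  have "(\<Sum>k\<in>{1..n}. lap_apply n E x k + c) = 0" using assms(3,4) by simp
  then have "real n * c = 0" using sum_lap_apply_eq_0[OF assms(1)] by (simp add: sum.distrib)
  then show ?thesis using assms(2) by simp
qed

lemma lap_apply_plus_sum_eq_0_imp_zero:
  assumes sg: "simple_graph n E" and conn: "connected_graph n E"
    and eq: "\<forall>k\<in>{1..n}. lap_apply n E x k + (\<Sum>l\<in>{1..n}. x l) = 0"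
  shows "\<forall>k\<in>{1..n}. x k = 0"
proof (cases "n = 0")
  case False
  then have n: "n \<ge> 1" by simp
  from eq have sum_x: "(\<Sum>l\<in>{1..n}. x l) = 0"
    by (rule lap_apply_plus_const_balanced_imp_zero[OF sg n]) simp
  have "\<forall>k\<in>{1..n}. x k = x 1"
    by (rule lap_apply_eq_0_imp_const[OF sg conn]) (use eq sum_x n in simp_all)
  moreover have "x 1 = 0"
  proof -
    have "(\<Sum>l\<in>{1..n}. x l) = (\<Sum>l\<in>{1..n}. x 1)"
      using \<open>\<forall>k\<in>{1..n}. x k = x 1\<close> by (intro sum.cong refl) blast
    with sum_x n show ?thesis by simp
  qed
  ultimately show ?thesis by metis
qed simp

lemma det_lap_plus_ones_mat_nonzero:
  assumes sg: "simple_graph n E" and conn: "connected_graph n E"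
  shows "det (lap_plus_ones_mat n E) \<noteq> 0"
proof
  assume "det (lap_plus_ones_mat n E) = 0"
  moreover have "lap_plus_ones_mat n E \<in> carrier_mat n n"
    unfolding lap_plus_ones_mat_def by simp
  ultimately obtain u where u: "u \<in> carrier_vec n" "u \<noteq> 0\<^sub>v n" "lap_plus_ones_mat n E *\<^sub>v u = 0\<^sub>v n"
    using det_0_iff_vec_prod_zero_field by blast
  define x where "x = (\<lambda>k. u $ (k - 1))"
  have eq: "\<forall>k\<in>{1..n}. lap_apply n E x k + (\<Sum>l\<in>{1..n}. x l) = 0"
  proof
    fix k assume k: "k \<in> {1..n}"
    then have "k - 1 < n" by auto
    have "lap_apply n E x k + (\<Sum>l\<in>{1..n}. x l) = (lap_plus_ones_mat n E *\<^sub>v u) $ (k - 1)"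
      unfolding x_def by (rule lap_plus_ones_mat_mult_vec[OF u(1) k, symmetric])
    also have "\<dots> = 0" using u(3) \<open>k - 1 < n\<close> by simp
    finally show "lap_apply n E x k + (\<Sum>l\<in>{1..n}. x l) = 0" .
  qed
  then have "\<forall>k\<in>{1..n}. x k = 0" by (rule lap_apply_plus_sum_eq_0_imp_zero[OF sg conn])
  then have "u = 0\<^sub>v n"
  proof (intro eq_vecI)
    fix a assume "\<forall>k\<in>{1..n}. x k = 0" "a < dim_vec (0\<^sub>v n :: real vec)"
    then show "u $ a = 0\<^sub>v n $ a" using x_def[THEN fun_cong, of "Suc a"] by auto
  qed (use u in auto)
  with u(2) show False ..
qed

lemma lap_apply_solvable:
  assumes sg: "simple_graph n E" and conn: "connected_graph n E"
    and balanced: "(\<Sum>k\<in>{1..n}. b k) = 0"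
  shows "\<exists>v. \<forall>k\<in>{1..n}. lap_apply n E v k = b k"
proof (cases "n = 0")
  case False
  then have n: "n \<ge> 1" by simp
  define M where "M = lap_plus_ones_mat n E"
  have M: "M \<in> carrier_mat n n" unfolding M_def lap_plus_ones_mat_def by simp
  obtain B where B: "B \<in> carrier_mat n n" "M * B = 1\<^sub>m n"
    using det_non_zero_imp_unit[OF M det_lap_plus_ones_mat_nonzero[OF sg conn, folded M_def]]
    by (auto simp: Units_def ring_mat_def)
  define bv where "bv = vec n (\<lambda>a. b (Suc a))"
  define u where "u = B *\<^sub>v bv"
  have u: "u \<in> carrier_vec n" unfolding u_def bv_def using B by simp
  have Mu: "M *\<^sub>v u = bv"
    unfolding u_def using B M by (simp add: assoc_mult_mat_vec[symmetric] bv_def)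
  have eq: "\<forall>k\<in>{1..n}. lap_apply n E (\<lambda>l. u $ (l - 1)) k + (\<Sum>l\<in>{1..n}. u $ (l - 1)) = b k"
  proof
    fix k assume k: "k \<in> {1..n}"
    then have "(M *\<^sub>v u) $ (k - 1) = b k" unfolding Mu bv_def by auto
    then show "lap_apply n E (\<lambda>l. u $ (l - 1)) k + (\<Sum>l\<in>{1..n}. u $ (l - 1)) = b k"
      using lap_plus_ones_mat_mult_vec[OF u k] unfolding M_def by simp
  qed
  then have "(\<Sum>l\<in>{1..n}. u $ (l - 1)) = 0"
    by (rule lap_apply_plus_const_balanced_imp_zero[OF sg n _ balanced])
  with eq show ?thesis by auto
qed simp

section \<open>Green's functions and effective resistances\<close>

definition green_family :: "nat \<Rightarrow> (nat \<Rightarrow> nat \<Rightarrow> bool) \<Rightarrow> (nat \<Rightarrow> nat \<Rightarrow> real) \<Rightarrow> bool" where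
  "green_family n E g \<longleftrightarrow> (\<forall>j\<in>{1..n}.
     (\<forall>k\<in>{1..n}. lap_apply n E (g j) k = (if k = j then 1 else 0) - 1 / real n) \<and>
     (\<Sum>k\<in>{1..n}. g j k) = 0)"

lemma green_family_exists:
  assumes sg: "simple_graph n E" and conn: "connected_graph n E"
  shows "\<exists>g. green_family n E g"
proof -
  have "\<forall>j\<in>{1..n}. \<exists>g. (\<forall>k\<in>{1..n}. lap_apply n E g k = (if k = j then 1 else 0) - 1 / real n)
            \<and> (\<Sum>k\<in>{1..n}. g k) = 0"
  proof
    fix j assume j: "j \<in> {1..n}"
    have "(\<Sum>k\<in>{1..n}. (if k = j then 1 else 0) - 1 / real n) = 0"
      using j by (simp add: sum_subtractf)
    from lap_apply_solvable[OF sg conn this] obtain v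
      where v: "\<forall>k\<in>{1..n}. lap_apply n E v k = (if k = j then 1 else 0) - 1 / real n" by blast
    define c where "c = (\<Sum>k\<in>{1..n}. v k) / real n"
    have "\<forall>k\<in>{1..n}. lap_apply n E (\<lambda>k. v k - c) k = (if k = j then 1 else 0) - 1 / real n"
      using v lap_apply_diff_const[OF sg] by simp
    moreover have "(\<Sum>k\<in>{1..n}. v k - c) = 0"
      using j unfolding c_def by (simp add: sum_subtractf)
    ultimately show "\<exists>g. (\<forall>k\<in>{1..n}. lap_apply n E g k = (if k = j then 1 else 0) - 1 / real n)
            \<and> (\<Sum>k\<in>{1..n}. g k) = 0" by blast
  qed
  from bchoice[OF this] show ?thesis unfolding green_family_def by blast
qed

lemma resistance_eq_potential_diff:
  assumes sg: "simple_graph n E" and conn: "connected_graph n E"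
    and a: "a \<in> {1..n}" and b: "b \<in> {1..n}"
    and v: "\<forall>k\<in>{1..n}. lap_apply n E v k = (if k = a then 1 else 0) - (if k = b then 1 else 0)"
  shows "resistance n E a b = v a - v b"
  unfolding resistance_def
proof (rule the_equality)
  show "\<exists>v'. (\<forall>k\<in>{1..n}. (\<Sum>l\<in>{1..n}. laplacian n E k l * v' l) =
            (if k = a then 1 else 0) - (if k = b then 1 else 0)) \<and> v a - v b = v' a - v' b"
    using v unfolding lap_apply_def by blast
next
  fix d assume "\<exists>v'. (\<forall>k\<in>{1..n}. (\<Sum>l\<in>{1..n}. laplacian n E k l * v' l) =
            (if k = a then 1 else 0) - (if k = b then 1 else 0)) \<and> d = v' a - v' b"
  then obtain v' where v': "\<forall>k\<in>{1..n}. lap_apply n E v' k = (if k = a then 1 else 0) - (if k = b then 1 else 0)"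
    and d: "d = v' a - v' b" unfolding lap_apply_def by blast
  have "\<forall>k\<in>{1..n}. lap_apply n E (\<lambda>k. v' k - v k) k = 0"
    using v v' by (simp add: lap_apply_diff)
  from lap_apply_eq_0_imp_const[OF sg conn a this] b have "v' b - v b = v' a - v a" by blast
  then show "d = v a - v b" unfolding d by simp
qed

lemma resistance_green_family:
  assumes sg: "simple_graph n E" and conn: "connected_graph n E" and g: "green_family n E g"
    and a: "a \<in> {1..n}" and b: "b \<in> {1..n}"
  shows "resistance n E a b = g a a - g a b - g b a + g b b"
proof -
  have "\<forall>k\<in>{1..n}. lap_apply n E (\<lambda>k. g a k - g b k) k = (if k = a then 1 else 0) - (if k = b then 1 else 0)"
    using g a b unfolding green_family_def by (simp add: lap_apply_diff)
  from resistance_eq_potential_diff[OF sg conn a b this] show ?thesis by simp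
qed

lemma green_family_column_sum:
  assumes sg: "simple_graph n E" and conn: "connected_graph n E" and g: "green_family n E g"
    and k: "k \<in> {1..n}"
  shows "(\<Sum>b\<in>{1..n}. g b k) = 0"
proof -
  define s where "s = (\<lambda>k. \<Sum>b\<in>{1..n}. g b k)"
  have "lap_apply n E s l = 0" if l: "l \<in> {1..n}" for l
  proof -
    have "lap_apply n E s l = (\<Sum>b\<in>{1..n}. (if l = b then 1 else 0) - 1 / real n)"
      unfolding s_def lap_apply_sum using g l unfolding green_family_def by (intro sum.cong) auto
    also have "\<dots> = 0" using l by (simp add: sum_subtractf)
    finally show ?thesis .
  qed
  then have const: "\<forall>l\<in>{1..n}. s l = s k" using lap_apply_eq_0_imp_const[OF sg conn k] by blast
  have "(\<Sum>l\<in>{1..n}. s l) = (\<Sum>b\<in>{1..n}. \<Sum>l\<in>{1..n}. g b l)" unfolding s_def by (rule sum.swap)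
  also have "\<dots> = 0" using g unfolding green_family_def by simp
  finally have "(\<Sum>l\<in>{1..n}. s k) = 0" using const by (metis (no_types, lifting) sum.cong)
  then show ?thesis using k unfolding s_def by simp
qed

lemma resistance_row_sum_green_family:
  assumes sg: "simple_graph n E" and conn: "connected_graph n E" and g: "green_family n E g"
    and a: "a \<in> {1..n}"
  shows "(\<Sum>b\<in>{1..n}. resistance n E a b) = real n * g a a + (\<Sum>b\<in>{1..n}. g b b)"
proof -
  have "(\<Sum>b\<in>{1..n}. resistance n E a b) = (\<Sum>b\<in>{1..n}. g a a - g a b - g b a + g b b)"
    using resistance_green_family[OF sg conn g a] by simp
  also have "\<dots> = real n * g a a - (\<Sum>b\<in>{1..n}. g a b) - (\<Sum>b\<in>{1..n}. g b a) + (\<Sum>b\<in>{1..n}. g b b)"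
    by (simp add: sum.distrib sum_subtractf)
  finally show ?thesis
    using g a green_family_column_sum[OF sg conn g a] unfolding green_family_def by simp
qed

lemma sum_eq_twice_sum_less:
  fixes f :: "'a::linorder \<Rightarrow> 'a \<Rightarrow> 'b::comm_semiring_1"
  assumes "finite A" and sym: "\<And>a b. f a b = f b a" and diag: "\<And>a. f a a = 0"
  shows "(\<Sum>a\<in>A. \<Sum>b\<in>A. f a b) = 2 * (\<Sum>(a, b)\<in>{(a, b). a \<in> A \<and> b \<in> A \<and> a < b}. f a b)"
proof -
  define P where "P = {(a, b). a \<in> A \<and> b \<in> A \<and> a < b}"
  define D where "D = {(a, b). a \<in> A \<and> b \<in> A \<and> a = b}"
  have "P \<subseteq> A \<times> A" "D \<subseteq> A \<times> A" "finite (A \<times> A)"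
    using \<open>finite A\<close> unfolding P_def D_def by auto
  then have fin: "finite P" "finite (prod.swap ` P)" "finite D"
    by (simp_all add: finite_subset)
  have AA: "A \<times> A = (P \<union> prod.swap ` P) \<union> D"
    unfolding P_def D_def by auto
  have "(\<Sum>a\<in>A. \<Sum>b\<in>A. f a b) = (\<Sum>(a, b)\<in>A \<times> A. f a b)"
    by (rule sum.cartesian_product)
  also have "\<dots> = (\<Sum>(a, b)\<in>(P \<union> prod.swap ` P) \<union> D. f a b)"
    by (simp only: AA)
  also have "\<dots> = (\<Sum>(a, b)\<in>P \<union> prod.swap ` P. f a b) + (\<Sum>(a, b)\<in>D. f a b)"
    using fin by (intro sum.union_disjoint) (auto simp: P_def D_def)
  also have "(\<Sum>(a, b)\<in>D. f a b) = 0"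
    by (intro sum.neutral) (auto simp: D_def diag)
  also have "(\<Sum>(a, b)\<in>P \<union> prod.swap ` P. f a b) = (\<Sum>(a, b)\<in>P. f a b) + (\<Sum>(a, b)\<in>prod.swap ` P. f a b)"
    using fin by (intro sum.union_disjoint) (auto simp: P_def)
  also have "(\<Sum>(a, b)\<in>prod.swap ` P. f a b) = (\<Sum>(a, b)\<in>P. f a b)"
    by (subst sum.reindex) (auto simp: sym intro: sum.cong)
  finally show ?thesis unfolding P_def by (simp add: mult_2)
qed

lemma kirchhoff_index_green_family:
  assumes sg: "simple_graph n E" and conn: "connected_graph n E" and g: "green_family n E g"
  shows "kirchhoff_index n E = real n * (\<Sum>b\<in>{1..n}. g b b)"
proof -
  define R where "R = (\<lambda>a b. g a a - g a b - g b a + g b b)"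
  have "kirchhoff_index n E = (\<Sum>(a, b)\<in>{(a, b). a \<in> {1..n} \<and> b \<in> {1..n} \<and> a < b}. R a b)"
    unfolding kirchhoff_index_def R_def
    by (intro sum.cong refl) (auto simp: resistance_green_family[OF sg conn g])
  then have "2 * kirchhoff_index n E = 2 * (\<Sum>(a, b)\<in>{(a, b). a \<in> {1..n} \<and> b \<in> {1..n} \<and> a < b}. R a b)"
    by simp
  also have "\<dots> = (\<Sum>a\<in>{1..n}. \<Sum>b\<in>{1..n}. R a b)"
    by (rule sum_eq_twice_sum_less[symmetric]) (auto simp: R_def)
  also have "\<dots> = (\<Sum>a\<in>{1..n}. real n * g a a + (\<Sum>b\<in>{1..n}. g b b))"
    using resistance_row_sum_green_family[OF sg conn g] resistance_green_family[OF sg conn g]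
    unfolding R_def by (intro sum.cong refl) (metis (no_types, lifting) sum.cong)
  also have "\<dots> = 2 * (real n * (\<Sum>b\<in>{1..n}. g b b))"
    by (simp add: sum.distrib sum_distrib_left)
  finally show ?thesis by simp
qed

section \<open>The inverse Perron value\<close>

definition rayleigh_values :: "nat \<Rightarrow> (nat \<Rightarrow> nat \<Rightarrow> bool) \<Rightarrow> nat \<Rightarrow> real set" where
  "rayleigh_values n E i = {lap_form n E x | x.
      (\<forall>j\<in>{1..n}. x j \<ge> 0) \<and> (\<Sum>j\<in>{1..n}. (x j)\<^sup>2) = 1 \<and> x i = 0}"

lemma inv_perron_eq_Inf: "inv_perron n E i = Inf (rayleigh_values n E i)"
  unfolding inv_perron_def rayleigh_values_def ..

lemma lap_form_scale: "lap_form n E (\<lambda>k. c * x k) = c\<^sup>2 * lap_form n E x"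
  unfolding lap_form_def by (simp add: sum_distrib_left power2_eq_square algebra_simps)

lemma rayleigh_quotient_in_rayleigh_values:
  assumes "\<forall>j\<in>{1..n}. x j \<ge> 0" "x i = 0" "(\<Sum>j\<in>{1..n}. (x j)\<^sup>2) > 0"
  shows "lap_form n E x / (\<Sum>j\<in>{1..n}. (x j)\<^sup>2) \<in> rayleigh_values n E i"
proof -
  define S where "S = (\<Sum>j\<in>{1..n}. (x j)\<^sup>2)"
  define y where "y = (\<lambda>k. x k / sqrt S)"
  have S: "S > 0" using assms(3) unfolding S_def .
  have "(\<Sum>j\<in>{1..n}. (y j)\<^sup>2) = (\<Sum>j\<in>{1..n}. (x j)\<^sup>2) / S"
    unfolding y_def using S by (simp add: power_divide sum_divide_distrib)
  then have "(\<Sum>j\<in>{1..n}. (y j)\<^sup>2) = 1" using S unfolding S_def by simp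
  moreover have "lap_form n E y = lap_form n E x / S"
    using lap_form_scale[of n E "1 / sqrt S" x] S unfolding y_def by (simp add: power_divide)
  moreover have "\<forall>j\<in>{1..n}. y j \<ge> 0" "y i = 0" using assms(1,2) S unfolding y_def by simp_all
  ultimately show ?thesis
    unfolding rayleigh_values_def S_def by (intro CollectI exI[of _ y]) simp
qed

lemma inv_perron_le_rayleigh_quotient:
  assumes sg: "simple_graph n E"
    and "\<forall>j\<in>{1..n}. x j \<ge> 0" "x i = 0" "(\<Sum>j\<in>{1..n}. (x j)\<^sup>2) > 0"
  shows "inv_perron n E i \<le> lap_form n E x / (\<Sum>j\<in>{1..n}. (x j)\<^sup>2)"
  unfolding inv_perron_eq_Inf
proof (rule cInf_lower)
  show "bdd_below (rayleigh_values n E i)"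
    unfolding rayleigh_values_def by (rule bdd_belowI[of _ 0]) (auto intro: lap_form_nonneg[OF sg])
qed (rule rayleigh_quotient_in_rayleigh_values[OF assms(2-4)])

lemma le_inv_perron:
  fixes x :: "nat \<Rightarrow> real"
  assumes "\<forall>j\<in>{1..n}. x j \<ge> 0" "x i = 0" "(\<Sum>j\<in>{1..n}. (x j)\<^sup>2) > 0"
    and lower: "\<And>y. \<forall>j\<in>{1..n}. y j \<ge> 0 \<Longrightarrow> (\<Sum>j\<in>{1..n}. (y j)\<^sup>2) = 1 \<Longrightarrow> y i = 0
      \<Longrightarrow> c \<le> lap_form n E y"
  shows "c \<le> inv_perron n E i"
  unfolding inv_perron_eq_Inf
proof (rule cInf_greatest)
  show "rayleigh_values n E i \<noteq> {}"
    using rayleigh_quotient_in_rayleigh_values[OF assms(1-3), of E] by blast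
qed (auto simp: rayleigh_values_def intro: lower)

lemma lap_potential_pos:
  assumes sg: "simple_graph n E" and i: "i \<in> {1..n}" and w: "w i = 0"
    and lw: "\<forall>k\<in>{1..n} - {i}. lap_apply n E w k = 1"
  shows "\<forall>k\<in>{1..n} - {i}. w k > 0"
proof -
  have not_min: "\<exists>l\<in>{1..n}. w l < w k" if k: "k \<in> {1..n} - {i}" for k
  proof (rule ccontr)
    assume "\<not> (\<exists>l\<in>{1..n}. w l < w k)"
    then have "lap_apply n E w k \<le> 0"
      using k by (auto simp: lap_apply_edge_sum[OF sg] intro!: sum_nonpos)
    with lw k show False by simp
  qed
  have "Min (w ` {1..n}) \<in> w ` {1..n}" using i by (intro Min_in) auto
  then obtain k0 where k0: "k0 \<in> {1..n}" "\<forall>l\<in>{1..n}. w k0 \<le> w l"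
    by (metis Min_le finite_atLeastAtMost finite_imageI image_eqI imageE)
  then have "k0 = i" using not_min by (meson DiffI not_le singletonD)
  then have "\<forall>l\<in>{1..n}. 0 \<le> w l" using k0 w by simp
  then show ?thesis using not_min w by (metis DiffD1 le_less not_le)
qed

lemma sum_mult_lap_apply_potential:
  assumes i: "i \<in> {1..n}" and "x i = 0"
    and lw: "\<forall>k\<in>{1..n} - {i}. lap_apply n E w k = 1"
  shows "(\<Sum>j\<in>{1..n}. x j * lap_apply n E w j) = (\<Sum>j\<in>{1..n}. x j)"
proof -
  have "(\<Sum>j\<in>{1..n}. x j * lap_apply n E w j) = (\<Sum>j\<in>{1..n} - {i}. x j * lap_apply n E w j)"
    using i \<open>x i = 0\<close> by (simp add: sum_diff1)
  also have "\<dots> = (\<Sum>j\<in>{1..n} - {i}. x j)" using lw by simp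
  also have "\<dots> = (\<Sum>j\<in>{1..n}. x j)" using i \<open>x i = 0\<close> by (simp add: sum_diff1)
  finally show ?thesis .
qed

lemma sum_squares_le_square_sum:
  fixes x :: "'a \<Rightarrow> real"
  assumes "\<forall>j\<in>A. x j \<ge> 0"
  shows "(\<Sum>j\<in>A. (x j)\<^sup>2) \<le> (\<Sum>j\<in>A. x j)\<^sup>2"
proof (cases "finite A")
  case True
  have "(x j)\<^sup>2 \<le> x j * (\<Sum>l\<in>A. x l)" if "j \<in> A" for j
    unfolding power2_eq_square using that assms True by (intro mult_left_mono member_le_sum) auto
  then have "(\<Sum>j\<in>A. (x j)\<^sup>2) \<le> (\<Sum>j\<in>A. x j * (\<Sum>l\<in>A. x l))" by (rule sum_mono)
  then show ?thesis by (simp add: power2_eq_square sum_distrib_right)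
qed simp

lemma lap_potential_nonneg:
  assumes "simple_graph n E" "i \<in> {1..n}" "w i = 0"
    and "\<forall>k\<in>{1..n} - {i}. lap_apply n E w k = 1"
  shows "\<forall>k\<in>{1..n}. w k \<ge> 0"
proof
  fix k assume k: "k \<in> {1..n}"
  show "w k \<ge> 0"
  proof (cases "k = i")
    case False
    with k lap_potential_pos[OF assms] have "w k > 0" by blast
    then show ?thesis by simp
  qed (simp add: assms(3))
qed

lemma lap_form_potential:
  assumes "i \<in> {1..n}" "w i = 0" "\<forall>k\<in>{1..n} - {i}. lap_apply n E w k = 1"
  shows "lap_form n E w = (\<Sum>k\<in>{1..n}. w k)"
  unfolding lap_form_eq_sum_mult_lap_apply by (rule sum_mult_lap_apply_potential[where x = w, OF assms])

lemma inverse_potential_sum_le_inv_perron: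
  assumes sg: "simple_graph n E" and i: "i \<in> {1..n}" and w: "w i = 0"
    and lw: "\<forall>k\<in>{1..n} - {i}. lap_apply n E w k = 1"
    and "(\<Sum>k\<in>{1..n}. (w k)\<^sup>2) > 0"
  shows "1 / (\<Sum>k\<in>{1..n}. w k) \<le> inv_perron n E i"
proof (rule le_inv_perron[OF lap_potential_nonneg[OF sg i w lw] w assms(5)])
  fix x :: "nat \<Rightarrow> real"
  assume x: "\<forall>j\<in>{1..n}. x j \<ge> 0" "(\<Sum>j\<in>{1..n}. (x j)\<^sup>2) = 1" "x i = 0"
  have "1 \<le> (\<Sum>j\<in>{1..n}. x j)\<^sup>2" using sum_squares_le_square_sum[OF x(1)] x(2) by simp
  also have "\<dots> = (\<Sum>j\<in>{1..n}. x j * lap_apply n E w j)\<^sup>2"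
    using sum_mult_lap_apply_potential[where x = x, OF i x(3) lw] by simp
  also have "\<dots> \<le> lap_form n E x * (\<Sum>k\<in>{1..n}. w k)"
    using sum_mult_lap_apply_sq_le[OF sg, of x w] unfolding lap_form_potential[OF i w lw] .
  finally have bound: "1 \<le> lap_form n E x * (\<Sum>k\<in>{1..n}. w k)" .
  have "(\<Sum>k\<in>{1..n}. w k) > 0"
  proof (rule ccontr)
    assume "\<not> (\<Sum>k\<in>{1..n}. w k) > 0"
    then have "lap_form n E x * (\<Sum>k\<in>{1..n}. w k) \<le> 0"
      using lap_form_nonneg[OF sg, of x] by (simp add: mult_nonneg_nonpos)
    with bound show False by simp
  qed
  with bound show "1 / (\<Sum>k\<in>{1..n}. w k) \<le> lap_form n E x" by (simp add: pos_divide_le_eq)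
qed

lemma square_sum_le_of_vanishing:
  fixes w :: "nat \<Rightarrow> real"
  assumes "i \<in> {1..n}" "w i = 0"
  shows "(\<Sum>k\<in>{1..n}. w k)\<^sup>2 \<le> (real n - 1) * (\<Sum>k\<in>{1..n}. (w k)\<^sup>2)"
proof -
  have "(\<Sum>k\<in>{1..n}. w k)\<^sup>2 = (\<Sum>k\<in>{1..n} - {i}. w k)\<^sup>2" using assms by (simp add: sum_diff1)
  also have "\<dots> \<le> (\<Sum>k\<in>{1..n} - {i}. (w k)\<^sup>2) * real (card ({1..n} - {i}))"
    by (rule sum_squared_le_sum_of_squares)
  also have "\<dots> = (real n - 1) * (\<Sum>k\<in>{1..n}. (w k)\<^sup>2)"
    using assms by (simp add: sum_diff1 of_nat_diff)
  finally show ?thesis .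
qed

lemma potential_sum_le_inv_perron:
  assumes sg: "simple_graph n E" and i: "i \<in> {1..n}" and w: "w i = 0"
    and lw: "\<forall>k\<in>{1..n} - {i}. lap_apply n E w k = 1"
  shows "(\<Sum>k\<in>{1..n}. w k) \<le> (real n - 1) / inv_perron n E i"
proof (cases "n = 1")
  case True
  then show ?thesis using i w by simp
next
  case False
  define Q where "Q = (\<Sum>k\<in>{1..n}. w k)"
  define S where "S = (\<Sum>k\<in>{1..n}. (w k)\<^sup>2)"
  define k1 where "k1 = (if i = 1 then 2 else 1 :: nat)"
  have k1: "k1 \<in> {1..n} - {i}" using i False unfolding k1_def by auto
  have w_k1: "0 < w k1" using lap_potential_pos[OF sg i w lw] k1 by blast
  also have "w k1 \<le> Q"
    unfolding Q_def using k1 lap_potential_nonneg[OF sg i w lw] by (intro member_le_sum) auto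
  finally have Q_pos: "Q > 0" .
  have "0 < (w k1)\<^sup>2" using w_k1 by simp
  also have "(w k1)\<^sup>2 \<le> S" unfolding S_def using k1 by (intro member_le_sum) auto
  finally have S_pos: "S > 0" .
  have upper: "inv_perron n E i \<le> Q / S"
    using inv_perron_le_rayleigh_quotient[OF sg lap_potential_nonneg[OF sg i w lw] w] S_pos
    unfolding lap_form_potential[OF i w lw] Q_def S_def by simp
  have "Q * inv_perron n E i \<le> Q * (Q / S)" using upper Q_pos by (intro mult_left_mono) simp_all
  also have "\<dots> = Q\<^sup>2 / S" by (simp add: power2_eq_square)
  also have "\<dots> \<le> real n - 1"
    using square_sum_le_of_vanishing[where w = w, OF i w] S_pos unfolding Q_def S_def by (simp add: pos_divide_le_eq)
  finally have "Q * inv_perron n E i \<le> real n - 1" .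
  moreover have "inv_perron n E i > 0"
  proof -
    have "0 < 1 / Q" using Q_pos by simp
    with inverse_potential_sum_le_inv_perron[OF sg i w lw S_pos[unfolded S_def]] show ?thesis
      unfolding Q_def by linarith
  qed
  ultimately have "Q \<le> (real n - 1) / inv_perron n E i" by (simp add: pos_le_divide_eq)
  then show ?thesis unfolding Q_def .
qed

theorem theorem4p2:
  fixes n :: nat and E :: "nat \<Rightarrow> nat \<Rightarrow> bool" and i :: nat
  assumes "simple_graph n E" and "connected_graph n E" and "i \<in> {1..n}"
  shows "real n * resistance_centrality n E i - kirchhoff_index n E
           \<le> (real n - 1) / inv_perron n E i"
proof -
  note sg = assms(1) and conn = assms(2) and i = assms(3)
  obtain g where g: "green_family n E g" using green_family_exists[OF sg conn] by blast
  then have g_i: "\<forall>k\<in>{1..n}. lap_apply n E (g i) k = (if k = i then 1 else 0) - 1 / real n"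
    "(\<Sum>k\<in>{1..n}. g i k) = 0"
    using i unfolding green_family_def by auto
  define w where "w = (\<lambda>k. real n * g i i - real n * g i k)"
  have "real n * resistance_centrality n E i - kirchhoff_index n E = (real n)\<^sup>2 * g i i"
    unfolding resistance_centrality_def resistance_row_sum_green_family[OF sg conn g i]
      kirchhoff_index_green_family[OF sg conn g]
    by (simp add: algebra_simps power2_eq_square)
  also have "\<dots> = (\<Sum>k\<in>{1..n}. w k)"
    unfolding w_def using g_i(2) by (simp add: sum_subtractf power2_eq_square flip: sum_distrib_left)
  also have "\<dots> \<le> (real n - 1) / inv_perron n E i"
  proof (rule potential_sum_le_inv_perron[OF sg i])
    show "w i = 0" unfolding w_def by simp
    show "\<forall>k\<in>{1..n} - {i}. lap_apply n E w k = 1"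
      using g_i(1) i unfolding w_def
      by (simp add: lap_apply_diff lap_apply_scale lap_apply_const[OF sg])
  qed
  finally show ?thesis .
qed

end
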